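(* Let $r\le N$, let $\mathbf{S}\in\mathbb{R}^{N\times N}$ be skew-symmetric, and let $\mathbf{B}\in\mathbb{R}^{N\times r}$ have all singular values $\sigma_1(\mathbf{B}),\dots,\sigma_r(\mathbf{B})$ in $[0,1]$. Let $[\mathbf{S}]=\mathbf{B}^\top\mathbf{S}\mathbf{B}$ and $\mathbf{Y}=\mathbf{I}_N+\mathbf{B}\big(\exp([\mathbf{S}])-\mathbf{I}_r\big)\mathbf{B}^\top$. Then $$\|\mathbf{Y}^\top\mathbf{Y}-\mathbf{I}_N\|_2\le\big(e^{\|\mathbf{S}\|_2}-1\big)^2\max_i\big|\sigma_i(\mathbf{B})^2(\sigma_i(\mathbf{B})^2-1)\big|\le\tfrac14\big(e^{\|\mathbf{S}\|_2}-1\big)^2.$$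
   Context: $\|\cdot\|_2$ denotes the spectral norm and $\exp$ the matrix exponential. (In the paper $\mathbf{B}$ is the output of Newton–Schulz iterations $\mathbf{M}_{k+1}=\frac12\mathbf{M}_k(3\mathbf{I}-\mathbf{M}_k^\top\mathbf{M}_k)$ started from a matrix normalised by its Frobenius norm plus $\epsilon>0$, which guarantees singular values in $[0,1]$.) *)

theory Defs
  imports "HOL-Analysis.Analysis"
begin

primrec matpow :: "real^'n^'n \<Rightarrow> nat \<Rightarrow> real^'n^'n" where
  "matpow A 0 = mat 1"
| "matpow A (Suc k) = A ** matpow A k"

definition mat_exp :: "real^'n^'n \<Rightarrow> real^'n^'n" where
  "mat_exp A = (\<Sum>k. (1 / fact k) *\<^sub>R matpow A k)"

definition spec_norm :: "real^'n^'m \<Rightarrow> real" where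
  "spec_norm A = onorm (\<lambda>x. A *v x)"

definition singular_values :: "real^'r^'n \<Rightarrow> real set" where
  "singular_values B =
     sqrt ` {\<mu>. \<exists>v. v \<noteq> 0 \<and> (transpose B ** B) *v v = \<mu> *\<^sub>R v}"

end

theory Submission
  imports Defs
begin

(* Write K = B^T S B, which is skew-symmetric, so exp K = I + C is orthogonal, i.e.
   C^T C = -(C + C^T); this collapses Y^T Y - I to B C^T (B^T B - I) C B^T.
   Since C = K P with P = exprel K and exprel x = (e^x - 1)/x, the outer factors B of K
   absorb the Gram defect: Y^T Y - I = Z W Z^T with W = B (B^T B - I) B^T and
   Z = B P^T B^T S^T, and |Z| <= exprel |S| * |S| = e^|S| - 1 because |B| <= 1.
   W = H^2 - H for H = B B^T is symmetric with eigenvalues nu (nu - 1), where nu = 0 or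
   nu = sigma^2 is an eigenvalue of B^T B, so |W| <= max |sigma^2 (sigma^2 - 1)| <= 1/4. *)

lemma matrix_add_rdistrib: "((A::real^'n^'m) + B) ** (C::real^'p^'n) = A ** C + B ** C"
  by (vector matrix_matrix_mult_def sum.distrib[symmetric] field_simps)

lemma matrix_diff_ldistrib: "(A::real^'n^'m) ** ((B::real^'p^'n) - C) = A ** B - A ** C"
  by (vector matrix_matrix_mult_def sum_subtractf[symmetric] field_simps)

lemma matrix_diff_rdistrib: "((A::real^'n^'m) - B) ** (C::real^'p^'n) = A ** C - B ** C"
  by (vector matrix_matrix_mult_def sum_subtractf[symmetric] field_simps)

lemma matrix_mul_uminus_left: "(- (A::real^'n^'m)) ** (B::real^'p^'n) = - (A ** B)"
  by (vector matrix_matrix_mult_def sum_negf[symmetric])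

lemma matrix_mul_uminus_right: "(A::real^'n^'m) ** (- (B::real^'p^'n)) = - (A ** B)"
  by (vector matrix_matrix_mult_def sum_negf[symmetric])

lemma transpose_add: "transpose ((A::real^'n^'m) + B) = transpose A + transpose B"
  by (vector transpose_def)

lemma transpose_diff: "transpose ((A::real^'n^'m) - B) = transpose A - transpose B"
  by (vector transpose_def)

lemma inner_gram_matrix: "inner y ((transpose B ** B) *v y) = (norm ((B::real^'n^'m) *v y))\<^sup>2"
  by (metis dot_lmul_matrix inner_commute matrix_vector_mul_assoc power2_norm_eq_inner
      transpose_matrix_vector)

lemma mat_1_neq_0: "(mat 1 :: real^'n^'n) \<noteq> 0"
  by (simp add: vec_eq_iff mat_def)

lemma spec_norm_nonneg: "0 \<le> spec_norm (A::real^'n^'m)"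
  unfolding spec_norm_def by (rule onorm_pos_le) simp

lemma norm_matrix_vector_le: "norm ((A::real^'n^'m) *v x) \<le> spec_norm A * norm x"
  unfolding spec_norm_def by (rule onorm) simp

lemma spec_norm_le: "(\<And>x. norm ((A::real^'n^'m) *v x) \<le> c * norm x) \<Longrightarrow> spec_norm A \<le> c"
  unfolding spec_norm_def by (rule onorm_le)

lemma spec_norm_mult: "spec_norm ((A::real^'n^'m) ** (B::real^'p^'n)) \<le> spec_norm A * spec_norm B"
proof -
  have "(*v) (A ** B) = (*v) A \<circ> (*v) B"
    by (auto simp: matrix_vector_mul_assoc)
  then show ?thesis
    unfolding spec_norm_def using onorm_compose[of "(*v) A" "(*v) B"] by simp
qed

lemma spec_norm_mult_le:
  assumes "spec_norm (A::real^'n^'m) \<le> a" and "spec_norm (B::real^'p^'n) \<le> b"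
  shows "spec_norm (A ** B) \<le> a * b"
proof -
  have "spec_norm A * spec_norm B \<le> a * b"
    using assms spec_norm_nonneg[of A] spec_norm_nonneg[of B] by (intro mult_mono) auto
  then show ?thesis
    using spec_norm_mult[of A B] by linarith
qed

lemma spec_norm_triangle: "spec_norm ((A::real^'n^'m) + B) \<le> spec_norm A + spec_norm B"
proof -
  have "(*v) (A + B) = (\<lambda>x. A *v x + B *v x)"
    by (simp add: fun_eq_iff matrix_vector_mult_add_rdistrib)
  then show ?thesis
    unfolding spec_norm_def using onorm_triangle[of "(*v) A" "(*v) B"] by simp
qed

lemma spec_norm_transpose_le: "spec_norm (transpose (A::real^'n^'m)) \<le> spec_norm A"
proof (rule spec_norm_le)
  fix x
  define y where "y = transpose A *v x"
  have "(norm y)\<^sup>2 = inner x (A *v y)"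
    by (simp add: power2_norm_eq_inner y_def dot_lmul_matrix)
  also have "\<dots> \<le> norm x * (spec_norm A * norm y)"
    using norm_cauchy_schwarz[of x "A *v y"] norm_matrix_vector_le[of A y]
    by (meson mult_left_mono norm_ge_zero order_trans)
  finally have "norm y * norm y \<le> (spec_norm A * norm x) * norm y"
    by (simp add: power2_eq_square algebra_simps)
  then show "norm (transpose A *v x) \<le> spec_norm A * norm x"
    using spec_norm_nonneg[of A] by (cases "norm y = 0") (auto simp: y_def)
qed

lemma spec_norm_transpose: "spec_norm (transpose (A::real^'n^'m)) = spec_norm A"
  using spec_norm_transpose_le[of A] spec_norm_transpose_le[of "transpose A"] by simp

lemma spec_norm_le_norm: "spec_norm (A::real^'n^'m) \<le> real CARD('m) * real CARD('n) * norm A"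
  unfolding spec_norm_def
proof (rule onorm_le_matrix_component)
  show "\<bar>A $ i $ j\<bar> \<le> norm A" for i j
    using component_le_norm_cart[of "A $ i" j] Finite_Cartesian_Product.norm_nth_le[of A i]
    by linarith
qed

lemma norm_le_spec_norm: "norm (A::real^'n^'m) \<le> real CARD('m) * real CARD('n) * spec_norm A"
proof -
  have "norm A \<le> (\<Sum>i\<in>UNIV. norm (A $ i))"
    by (simp add: norm_vec_def L2_set_le_sum)
  also have "\<dots> \<le> (\<Sum>i\<in>(UNIV::'m set). \<Sum>j\<in>(UNIV::'n set). spec_norm A)"
  proof (rule sum_mono)
    fix i
    have "norm (A $ i) \<le> (\<Sum>j\<in>UNIV. \<bar>A $ i $ j\<bar>)"
      by (rule norm_le_l1_cart)
    also have "\<dots> \<le> (\<Sum>j\<in>(UNIV::'n set). spec_norm A)"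
      unfolding spec_norm_def by (rule sum_mono) (rule matrix_component_le_onorm)
    finally show "norm (A $ i) \<le> (\<Sum>j\<in>(UNIV::'n set). spec_norm A)" .
  qed
  finally show ?thesis by simp
qed

(* Square matrices under the spectral norm form a Banach algebra; there mat_exp is the
   library's exp, whose functional equation yields exp (- K) * exp K = 1. *)
typedef ('n::finite) sqmat = "UNIV :: (real^'n^'n) set" by simp

setup_lifting type_definition_sqmat

instantiation sqmat :: (finite) real_normed_algebra_1
begin

lift_definition zero_sqmat :: "'a sqmat" is 0 .
lift_definition one_sqmat :: "'a sqmat" is "mat 1" .
lift_definition plus_sqmat :: "'a sqmat \<Rightarrow> 'a sqmat \<Rightarrow> 'a sqmat" is "(+)" .
lift_definition minus_sqmat :: "'a sqmat \<Rightarrow> 'a sqmat \<Rightarrow> 'a sqmat" is "(-)" .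
lift_definition uminus_sqmat :: "'a sqmat \<Rightarrow> 'a sqmat" is uminus .
lift_definition times_sqmat :: "'a sqmat \<Rightarrow> 'a sqmat \<Rightarrow> 'a sqmat" is "(**)" .
lift_definition scaleR_sqmat :: "real \<Rightarrow> 'a sqmat \<Rightarrow> 'a sqmat" is scaleR .
lift_definition norm_sqmat :: "'a sqmat \<Rightarrow> real" is spec_norm .

definition dist_sqmat :: "'a sqmat \<Rightarrow> 'a sqmat \<Rightarrow> real"
  where "dist_sqmat x y = norm (x - y)"

definition sgn_sqmat :: "'a sqmat \<Rightarrow> 'a sqmat"
  where "sgn_sqmat x = inverse (norm x) *\<^sub>R x"

definition uniformity_sqmat :: "('a sqmat \<times> 'a sqmat) filter"
  where "uniformity_sqmat = (INF e\<in>{0<..}. principal {(x, y). dist x y < e})"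

definition open_sqmat :: "'a sqmat set \<Rightarrow> bool"
  where "open_sqmat U = (\<forall>x\<in>U. \<forall>\<^sub>F (x', y) in uniformity. x' = x \<longrightarrow> y \<in> U)"

instance
proof
  fix x y z :: "'a sqmat" and a b :: real
  show "x * y * z = x * (y * z)"
    by transfer (simp add: matrix_mul_assoc)
  show "1 * x = x" "x * 1 = x"
    by (transfer, simp)+
  show "(x + y) * z = x * z + y * z"
    by transfer (rule matrix_add_rdistrib)
  show "x * (y + z) = x * y + x * z"
    by transfer (rule matrix_add_ldistrib)
  show "a *\<^sub>R x * y = a *\<^sub>R (x * y)" "x * a *\<^sub>R y = a *\<^sub>R (x * y)"
    by (transfer, simp add: scalar_matrix_assoc matrix_scalar_ac)+
  show "(0::'a sqmat) \<noteq> 1"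
    by transfer (simp add: mat_1_neq_0[symmetric])
  show "norm (1::'a sqmat) = 1"
    by transfer (simp add: spec_norm_def onorm_id)
  show "norm (x * y) \<le> norm x * norm y"
    by transfer (rule spec_norm_mult)
  show "norm (x + y) \<le> norm x + norm y"
    by transfer (rule spec_norm_triangle)
  show "norm (a *\<^sub>R x) = \<bar>a\<bar> * norm x"
    by transfer (simp add: spec_norm_def onorm_scaleR scaleR_matrix_vector_assoc[symmetric])
  show "(norm x = 0) = (x = 0)"
    by transfer (simp add: spec_norm_def onorm_eq_0 matrix_eq)
qed (transfer; simp add: algebra_simps scaleR_add_right scaleR_add_left; fail
   | simp add: dist_sqmat_def sgn_sqmat_def uniformity_sqmat_def open_sqmat_def)+

end

lemma bounded_linear_Rep_sqmat: "bounded_linear (Rep_sqmat :: 'n::finite sqmat \<Rightarrow> _)"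
proof (rule bounded_linear_intro)
  show "norm (Rep_sqmat x) \<le> norm x * (real CARD('n) * real CARD('n))" for x :: "'n sqmat"
    using norm_le_spec_norm[of "Rep_sqmat x"] by (simp add: norm_sqmat.rep_eq mult.commute)
qed (simp_all add: plus_sqmat.rep_eq scaleR_sqmat.rep_eq)

lemma bounded_linear_Abs_sqmat: "bounded_linear (Abs_sqmat :: real^'n^'n \<Rightarrow> 'n sqmat)"
proof (rule bounded_linear_intro)
  show "norm (Abs_sqmat A :: 'n sqmat) \<le> norm A * (real CARD('n) * real CARD('n))" for A
    using spec_norm_le_norm[of A] by (simp add: norm_sqmat.abs_eq mult.commute)
qed (simp_all add: plus_sqmat.abs_eq scaleR_sqmat.abs_eq)

instance sqmat :: (finite) banach
proof
  fix X :: "nat \<Rightarrow> 'a sqmat"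
  assume "Cauchy X"
  then have "Cauchy (\<lambda>n. Rep_sqmat (X n))"
    by (rule bounded_linear.Cauchy[OF bounded_linear_Rep_sqmat])
  then obtain L where "(\<lambda>n. Rep_sqmat (X n)) \<longlonglongrightarrow> L"
    using Cauchy_convergent_iff convergent_def by blast
  then have "(\<lambda>n. Abs_sqmat (Rep_sqmat (X n))) \<longlonglongrightarrow> Abs_sqmat L"
    by (rule bounded_linear.tendsto[OF bounded_linear_Abs_sqmat])
  then show "convergent X"
    by (auto simp: convergent_def Rep_sqmat_inverse)
qed

lemma Rep_sqmat_power: "Rep_sqmat (x ^ k) = matpow (Rep_sqmat x) k"
  by (induction k) (simp_all add: one_sqmat.rep_eq times_sqmat.rep_eq)

lemma sums_mat_exp: "(\<lambda>k. (1 / fact k) *\<^sub>R matpow A k) sums mat_exp A"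
  and mat_exp_eq_exp: "mat_exp A = Rep_sqmat (exp (Abs_sqmat A))"
proof -
  have "(\<lambda>k. Rep_sqmat (Abs_sqmat A ^ k /\<^sub>R fact k)) sums Rep_sqmat (exp (Abs_sqmat A))"
    by (rule bounded_linear.sums[OF bounded_linear_Rep_sqmat exp_converges])
  then have sums: "(\<lambda>k. (1 / fact k) *\<^sub>R matpow A k) sums Rep_sqmat (exp (Abs_sqmat A))"
    by (simp add: scaleR_sqmat.rep_eq Rep_sqmat_power Abs_sqmat_inverse divide_inverse_commute)
  then show "mat_exp A = Rep_sqmat (exp (Abs_sqmat A))"
    unfolding mat_exp_def by (rule sums_unique[symmetric])
  with sums show "(\<lambda>k. (1 / fact k) *\<^sub>R matpow A k) sums mat_exp A"
    by simp
qed

lemma matpow_transpose: "matpow (transpose A) k = transpose (matpow A k)"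
proof (induction k)
  case (Suc k)
  have "matpow A k ** A = A ** matpow A k"
    by (induction k) (simp_all, metis matrix_mul_assoc)
  with Suc show ?case
    by (metis matpow.simps(2) matrix_transpose_mul)
qed simp

lemma mat_exp_transpose: "mat_exp (transpose A) = transpose (mat_exp A)"
proof -
  have "bounded_linear (transpose :: real^'n^'n \<Rightarrow> _)"
    by (simp add: bounded_linearI' transpose_add transpose_scalar)
  then have "(\<lambda>k. transpose ((1 / fact k) *\<^sub>R matpow A k)) sums transpose (mat_exp A)"
    using sums_mat_exp by (rule bounded_linear.sums)
  then show ?thesis
    unfolding mat_exp_def by (simp add: transpose_scalar matpow_transpose sums_unique[symmetric])
qed

lemma orthogonal_matrix_mat_exp:
  assumes "transpose K = - K"
  shows "orthogonal_matrix (mat_exp K)"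
proof -
  have "transpose (mat_exp K) = mat_exp (- K)"
    using mat_exp_transpose[of K] assms by simp
  then have "transpose (mat_exp K) ** mat_exp K
      = Rep_sqmat (exp (- Abs_sqmat K) * exp (Abs_sqmat K))"
    by (simp add: mat_exp_eq_exp times_sqmat.rep_eq uminus_sqmat.abs_eq)
  also have "\<dots> = mat 1"
    using exp_minus_inverse[of "- Abs_sqmat K"] by (simp add: one_sqmat.rep_eq)
  finally show ?thesis
    by (simp add: orthogonal_matrix)
qed

(* exprel x = (exp x - 1) / x, given by its series so that it is defined at 0 and in any
   Banach algebra. *)
definition exprel :: "'a::{real_normed_algebra_1,banach} \<Rightarrow> 'a"
  where "exprel x = (\<Sum>k. x ^ k /\<^sub>R fact (Suc k))"

lemma norm_exprel_term_le: "norm (x ^ k /\<^sub>R fact (Suc k)) \<le> norm x ^ k /\<^sub>R fact (Suc k)"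
  for x :: "'a::{real_normed_algebra_1,banach}"
  using norm_power_ineq[of x k] by (simp add: divide_right_mono divide_inverse_commute)

lemma summable_exprel: "summable (\<lambda>k. x ^ k /\<^sub>R fact (Suc k))"
  for x :: "'a::{real_normed_algebra_1,banach}"
proof (rule summable_comparison_test')
  show "summable (\<lambda>k. norm x ^ k /\<^sub>R fact k)"
    by (rule summable_exp_generic)
  have "norm x ^ k / fact (Suc k) \<le> norm x ^ k / fact k" for k
    by (intro divide_left_mono) (auto intro: fact_mono)
  then have "norm x ^ k /\<^sub>R fact (Suc k) \<le> norm x ^ k /\<^sub>R fact k" for k
    by (simp add: divide_inverse_commute)
  then show "norm (x ^ k /\<^sub>R fact (Suc k)) \<le> norm x ^ k /\<^sub>R fact k" for k
    using norm_exprel_term_le order_trans by blast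
qed

lemma exp_eq_exprel: "exp x = 1 + x * exprel x"
  for x :: "'a::{real_normed_algebra_1,banach}"
proof -
  have "(\<lambda>k. x ^ Suc k /\<^sub>R fact (Suc k)) sums (exp x - 1)"
    using exp_converges[of x] by (subst sums_Suc_iff) simp
  moreover have "(\<lambda>k. x * (x ^ k /\<^sub>R fact (Suc k))) sums (x * exprel x)"
    unfolding exprel_def by (rule sums_mult[OF summable_exprel[THEN summable_sums]])
  ultimately have "x * exprel x = exp x - 1"
    by (simp add: sums_unique2)
  then show ?thesis
    by simp
qed

lemma norm_exprel_le: "norm (exprel x) \<le> exprel (norm x)"
  for x :: "'a::{real_normed_algebra_1,banach}"
  unfolding exprel_def by (intro norm_suminf_le summable_exprel norm_exprel_term_le)

lemma exprel_mono: "0 \<le> a \<Longrightarrow> a \<le> b \<Longrightarrow> exprel a \<le> exprel (b::real)"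
  unfolding exprel_def
  by (intro suminf_le summable_exprel) (auto intro!: divide_right_mono power_mono)

lemma mat_exp_eq_mat_1_plus_mult:
  "\<exists>P. mat_exp K = mat 1 + K ** P \<and> spec_norm P \<le> exprel (spec_norm K)"
proof (intro exI conjI)
  show "mat_exp K = mat 1 + K ** Rep_sqmat (exprel (Abs_sqmat K))"
    by (simp add: mat_exp_eq_exp exp_eq_exprel plus_sqmat.rep_eq one_sqmat.rep_eq
        times_sqmat.rep_eq Abs_sqmat_inverse)
  show "spec_norm (Rep_sqmat (exprel (Abs_sqmat K))) \<le> exprel (spec_norm K)"
    using norm_exprel_le[of "Abs_sqmat K"] by (simp add: norm_sqmat.rep_eq Abs_sqmat_inverse)
qed

definition eigenvalues :: "real^'n^'n \<Rightarrow> real set"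
  where "eigenvalues X = {\<mu>. \<exists>v. v \<noteq> 0 \<and> X *v v = \<mu> *\<^sub>R v}"

lemma singular_values_eq_sqrt_eigenvalues:
  "singular_values B = sqrt ` eigenvalues (transpose B ** B)"
  by (simp add: singular_values_def eigenvalues_def)

lemma inner_symmetric_matrix: "transpose X = X \<Longrightarrow> inner (X *v a) b = inner a (X *v (b::real^'n))"
  by (metis dot_lmul_matrix transpose_matrix_vector)

lemma linear_coeff_eq_0_if_quadratic_nonneg:
  fixes a b :: real
  assumes "\<And>t. 0 \<le> t * a + t\<^sup>2 * b"
  shows "a = 0"
proof (rule ccontr)
  assume "a \<noteq> 0"
  define c where "c = \<bar>b\<bar> + 1"
  have "c > 0" "b - c < 0"
    by (simp_all add: c_def)
  have "(- a / c) * a + (- a / c)\<^sup>2 * b = a\<^sup>2 / c\<^sup>2 * (b - c)"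
    using \<open>c > 0\<close> by (simp add: field_simps power2_eq_square)
  also have "\<dots> < 0"
    using \<open>a \<noteq> 0\<close> \<open>c > 0\<close> \<open>b - c < 0\<close> by (intro mult_pos_neg) auto
  finally show False
    using assms[of "- a / c"] by linarith
qed

(* Eigenvectors of symmetric matrices are obtained variationally, by maximising the
   quadratic form on the unit sphere of an invariant subspace. *)
lemma quadratic_form_max_on_subspace:
  fixes X :: "real^'n^'n"
  assumes "subspace V" and "v \<in> V" and "v \<noteq> 0"
  obtains u l where "u \<in> V" "u \<noteq> 0" "inner u (X *v u) = l * inner u u"
    "\<And>y. y \<in> V \<Longrightarrow> inner y (X *v y) \<le> l * inner y y"
proof -
  define f where "f y = inner y (X *v y)" for y
  have "compact (sphere 0 1 \<inter> V)"
    by (intro compact_Int_closed compact_sphere closed_subspace assms(1))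
  moreover have "v /\<^sub>R norm v \<in> sphere 0 1 \<inter> V"
    using assms by (simp add: subspace_scale)
  moreover have "continuous_on (sphere 0 1 \<inter> V) f"
    unfolding f_def by (intro continuous_intros)
  ultimately obtain u where u: "u \<in> sphere 0 1 \<inter> V"
    and u_max: "\<And>y. y \<in> sphere 0 1 \<inter> V \<Longrightarrow> f y \<le> f u"
    using continuous_attains_sup[of "sphere 0 1 \<inter> V" f] by blast
  have "f y \<le> f u * inner y y" if "y \<in> V" for y
  proof (cases "y = 0")
    case False
    have "y /\<^sub>R norm y \<in> sphere 0 1 \<inter> V"
      using that False assms(1) by (simp add: subspace_scale)
    then have "f (y /\<^sub>R norm y) \<le> f u"
      by (rule u_max)
    moreover have "f (y /\<^sub>R norm y) = f y / (norm y)\<^sup>2"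
      by (simp add: f_def matrix_vector_mult_scaleR power2_eq_square field_simps)
    ultimately have "f y / (norm y)\<^sup>2 \<le> f u"
      by simp
    then show ?thesis
      using False by (simp add: field_simps power2_norm_eq_inner[symmetric])
  qed (simp add: f_def)
  moreover have "inner u u = 1" "u \<noteq> 0"
    using u by (auto simp: power2_norm_eq_inner[symmetric])
  ultimately show ?thesis
    using u by (intro that[of u "f u"]) (auto simp: f_def)
qed

lemma eigenvector_if_quadratic_form_max:
  fixes X :: "real^'n^'n"
  assumes sym: "transpose X = X" and V: "subspace V" and inv: "\<And>v. v \<in> V \<Longrightarrow> X *v v \<in> V"
    and "u \<in> V" and at_u: "inner u (X *v u) = l * inner u u"
    and max: "\<And>y. y \<in> V \<Longrightarrow> inner y (X *v y) \<le> l * inner y y"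
  shows "X *v u = l *\<^sub>R u"
proof -
  define w where "w = l *\<^sub>R u - X *v u"
  have "w \<in> V"
    unfolding w_def using V inv \<open>u \<in> V\<close> by (simp add: subspace_diff subspace_scale)
  have "inner w w = inner w (l *\<^sub>R u) - inner w (X *v u)"
    by (metis inner_diff_right w_def)
  then have w_w: "inner w w = l * inner u w - inner w (X *v u)"
    by (simp add: inner_commute[of w u])
  have u_Xw: "inner u (X *v w) = inner w (X *v u)"
    using inner_symmetric_matrix[OF sym, of u w] by (simp add: inner_commute)
  \<comment> \<open>first-order condition of the maximum at \<open>u\<close> in direction \<open>w\<close>\<close>
  have "0 \<le> t * (2 * inner w w) + t\<^sup>2 * (l * inner w w - inner w (X *v w))" for t
  proof -
    have "u + t *\<^sub>R w \<in> V"
      using V \<open>u \<in> V\<close> \<open>w \<in> V\<close> by (simp add: subspace_add subspace_scale)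
    then have "0 \<le> l * inner (u + t *\<^sub>R w) (u + t *\<^sub>R w) - inner (u + t *\<^sub>R w) (X *v (u + t *\<^sub>R w))"
      using max by simp
    also have "\<dots> = 2 * t * (l * inner u w - inner w (X *v u))
        + t\<^sup>2 * (l * inner w w - inner w (X *v w))"
      using at_u u_Xw
      by (simp add: inner_add_left inner_add_right matrix_vector_right_distrib
          matrix_vector_mult_scaleR algebra_simps power2_eq_square inner_commute)
    also have "\<dots> = t * (2 * inner w w) + t\<^sup>2 * (l * inner w w - inner w (X *v w))"
      by (simp add: w_w)
    finally show ?thesis .
  qed
  then have "2 * inner w w = 0"
    by (rule linear_coeff_eq_0_if_quadratic_nonneg)
  then show ?thesis
    by (simp add: w_def)
qed

lemma symmetric_matrix_eigenvector_in_subspace: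
  fixes X :: "real^'n^'n"
  assumes "transpose X = X" and "subspace V" and "\<And>v. v \<in> V \<Longrightarrow> X *v v \<in> V"
    and "v \<in> V" and "v \<noteq> 0"
  obtains u l where "u \<in> V" "u \<noteq> 0" "X *v u = l *\<^sub>R u"
    "\<And>y. y \<in> V \<Longrightarrow> inner y (X *v y) \<le> l * inner y y"
proof -
  obtain u l where "u \<in> V" "u \<noteq> 0" "inner u (X *v u) = l * inner u u"
    and max: "\<And>y. y \<in> V \<Longrightarrow> inner y (X *v y) \<le> l * inner y y"
    using quadratic_form_max_on_subspace[OF assms(2,4,5)] by blast
  moreover have "X *v u = l *\<^sub>R u"
    using eigenvector_if_quadratic_form_max[OF assms(1-3)] calculation by blast
  ultimately show ?thesis
    using that by blast
qed

lemma commuting_symmetric_common_eigenvector: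
  fixes X Y :: "real^'n^'n"
  assumes "transpose X = X" and XY: "X ** Y = Y ** X" and "v \<noteq> 0" and "Y *v v = \<mu> *\<^sub>R v"
  obtains u \<nu> where "u \<noteq> 0" "Y *v u = \<mu> *\<^sub>R u" "X *v u = \<nu> *\<^sub>R u"
proof -
  let ?V = "{u. Y *v u = \<mu> *\<^sub>R u}"
  have "subspace ?V"
    by (auto simp: subspace_def matrix_vector_right_distrib matrix_vector_mult_scaleR
        scaleR_add_right)
  moreover have "X *v u \<in> ?V" if "u \<in> ?V" for u
    using that by (simp add: matrix_vector_mul_assoc XY[symmetric] matrix_vector_mult_scaleR)
      (simp add: matrix_vector_mul_assoc[symmetric] matrix_vector_mult_scaleR)
  ultimately show ?thesis
    using symmetric_matrix_eigenvector_in_subspace[OF assms(1), of ?V v] assms(3,4) that by blast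
qed

lemma symmetric_matrix_eigenvectors_orthogonal:
  fixes X :: "real^'n^'n"
  assumes "transpose X = X" and "X *v u = \<mu> *\<^sub>R u" and "X *v v = \<nu> *\<^sub>R v" and "\<mu> \<noteq> \<nu>"
  shows "inner u v = 0"
proof -
  have "\<mu> * inner u v = \<nu> * inner u v"
    using inner_symmetric_matrix[OF assms(1), of u v] assms(2,3) by simp
  then show ?thesis
    using assms(4) by simp
qed

lemma finite_eigenvalues_symmetric:
  fixes X :: "real^'n^'n"
  assumes "transpose X = X"
  shows "finite (eigenvalues X)"
proof -
  define f where "f \<mu> = (SOME v. v \<noteq> 0 \<and> X *v v = \<mu> *\<^sub>R v)" for \<mu>
  have f: "f \<mu> \<noteq> 0 \<and> X *v f \<mu> = \<mu> *\<^sub>R f \<mu>" if "\<mu> \<in> eigenvalues X" for \<mu>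
    using that someI_ex[of "\<lambda>v. v \<noteq> 0 \<and> X *v v = \<mu> *\<^sub>R v"]
    by (simp add: eigenvalues_def f_def)
  have orth: "inner (f \<mu>) (f \<nu>) = 0"
    if "\<mu> \<in> eigenvalues X" "\<nu> \<in> eigenvalues X" "\<mu> \<noteq> \<nu>" for \<mu> \<nu>
    using symmetric_matrix_eigenvectors_orthogonal[OF assms] f that by blast
  have "inj_on f (eigenvalues X)"
  proof (rule inj_onI, rule ccontr)
    fix \<mu> \<nu> assume "\<mu> \<in> eigenvalues X" "\<nu> \<in> eigenvalues X" "f \<mu> = f \<nu>" "\<mu> \<noteq> \<nu>"
    then show False
      using orth[of \<mu> \<nu>] f[of \<mu>] by simp
  qed
  moreover have "pairwise orthogonal (f ` eigenvalues X)"
    by (intro pairwise_imageI) (simp add: orthogonal_def orth)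
  then have "independent (f ` eigenvalues X)"
    by (rule pairwise_orthogonal_independent) (use f in force)
  then have "finite (f ` eigenvalues X)"
    using independent_bound by blast
  ultimately show ?thesis
    using finite_imageD by blast
qed

lemma symmetric_matrix_max_eigenvector:
  fixes X :: "real^'n^'n"
  assumes "transpose X = X"
  obtains u l where "u \<noteq> 0" "X *v u = l *\<^sub>R u" "\<And>y. inner y (X *v y) \<le> l * inner y y"
proof -
  have nonzero: "(axis undefined 1 :: real^'n) \<noteq> 0"
    by simp
  obtain u l where "u \<noteq> 0" "X *v u = l *\<^sub>R u" "\<And>y. y \<in> UNIV \<Longrightarrow> inner y (X *v y) \<le> l * inner y y"
    by (rule symmetric_matrix_eigenvector_in_subspace[OF assms subspace_UNIV _ UNIV_I nonzero]) auto
  then show ?thesis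
    using that by blast
qed

lemma eigenvalues_symmetric_nonempty:
  fixes X :: "real^'n^'n"
  assumes "transpose X = X"
  shows "eigenvalues X \<noteq> {}"
proof -
  obtain u l where "u \<noteq> 0" "X *v u = l *\<^sub>R u"
    using symmetric_matrix_max_eigenvector[OF assms] by blast
  then show ?thesis
    unfolding eigenvalues_def by blast
qed

(* |W x|^2 = <x, W^2 x> is bounded by the top eigenvalue of W^2, and a common
   eigenvector of W and W^2 shows that it is mu^2 for an eigenvalue mu of W. *)
lemma spec_norm_symmetric_le:
  fixes W :: "real^'n^'n"
  assumes sym: "transpose W = W" and bound: "\<And>\<mu>. \<mu> \<in> eigenvalues W \<Longrightarrow> \<bar>\<mu>\<bar> \<le> M"
  shows "spec_norm W \<le> M"
proof -
  have "transpose (W ** W) = W ** W"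
    by (simp add: matrix_transpose_mul sym)
  then obtain u l where u: "u \<noteq> 0" "(W ** W) *v u = l *\<^sub>R u"
    and max: "\<And>y. inner y ((W ** W) *v y) \<le> l * inner y y"
    using symmetric_matrix_max_eigenvector by blast
  have "W ** (W ** W) = (W ** W) ** W"
    by (simp add: matrix_mul_assoc)
  then obtain v \<mu> where v: "v \<noteq> 0" "(W ** W) *v v = l *\<^sub>R v" "W *v v = \<mu> *\<^sub>R v"
    using commuting_symmetric_common_eigenvector[OF sym _ u] by blast
  have "l *\<^sub>R v = \<mu>\<^sup>2 *\<^sub>R v"
    using v by (simp add: matrix_vector_mul_assoc[symmetric] matrix_vector_mult_scaleR
        power2_eq_square)
  then have l: "l = \<mu>\<^sup>2"
    using v(1) by simp
  have "\<bar>\<mu>\<bar> \<le> M"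
    using v by (intro bound) (auto simp: eigenvalues_def)
  show ?thesis
  proof (rule spec_norm_le)
    fix x
    have "(norm (W *v x))\<^sup>2 = inner x ((W ** W) *v x)"
      using inner_symmetric_matrix[OF sym, of "W *v x" x]
      by (simp add: power2_norm_eq_inner matrix_vector_mul_assoc[symmetric]
          inner_commute[of x "W *v (W *v x)"])
    also have "\<dots> \<le> \<mu>\<^sup>2 * (norm x)\<^sup>2"
      using max[of x] by (simp only: l power2_norm_eq_inner)
    also have "\<dots> = (\<bar>\<mu>\<bar> * norm x)\<^sup>2"
      by (simp add: power_mult_distrib)
    also have "\<dots> \<le> (M * norm x)\<^sup>2"
      using \<open>\<bar>\<mu>\<bar> \<le> M\<close> by (intro power_mono mult_right_mono) auto
    finally have "(norm (W *v x))\<^sup>2 \<le> (M * norm x)\<^sup>2" .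
    moreover have "0 \<le> M * norm x"
      using \<open>\<bar>\<mu>\<bar> \<le> M\<close> abs_ge_zero[of \<mu>] by simp
    ultimately show "norm (W *v x) \<le> M * norm x"
      by (rule power2_le_imp_le)
  qed
qed

lemma eigenvalues_gram_nonneg:
  fixes B :: "real^'n^'m"
  assumes "\<mu> \<in> eigenvalues (transpose B ** B)"
  shows "0 \<le> \<mu>"
proof -
  obtain v where "v \<noteq> 0" "(transpose B ** B) *v v = \<mu> *\<^sub>R v"
    using assms by (auto simp: eigenvalues_def)
  then have "\<mu> * inner v v = (norm (B *v v))\<^sup>2" and "0 < inner v v"
    using inner_gram_matrix[of v B] by simp_all
  then show ?thesis
    by (metis zero_le_power2 zero_le_mult_iff not_le)
qed

lemma spec_norm_le_if_gram_eigenvalues_le: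
  fixes B :: "real^'n^'m"
  assumes bound: "\<And>\<mu>. \<mu> \<in> eigenvalues (transpose B ** B) \<Longrightarrow> \<mu> \<le> c\<^sup>2" and "0 \<le> c"
  shows "spec_norm B \<le> c"
proof (rule spec_norm_le)
  have gram: "spec_norm (transpose B ** B) \<le> c\<^sup>2"
  proof (rule spec_norm_symmetric_le)
    show "transpose (transpose B ** B) = transpose B ** B"
      by (simp add: matrix_transpose_mul)
    show "\<bar>\<mu>\<bar> \<le> c\<^sup>2" if "\<mu> \<in> eigenvalues (transpose B ** B)" for \<mu>
      using bound[OF that] eigenvalues_gram_nonneg[OF that] by simp
  qed
  fix x
  have "(norm (B *v x))\<^sup>2 \<le> norm x * norm ((transpose B ** B) *v x)"
    unfolding inner_gram_matrix[symmetric] by (rule norm_cauchy_schwarz)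
  also have "\<dots> \<le> norm x * (c\<^sup>2 * norm x)"
    using norm_matrix_vector_le[of "transpose B ** B" x] mult_right_mono[OF gram norm_ge_zero[of x]]
    by (intro mult_left_mono) auto
  also have "\<dots> = (c * norm x)\<^sup>2"
    by (simp add: power2_eq_square)
  finally show "norm (B *v x) \<le> c * norm x"
    by (rule power2_le_imp_le) (simp add: \<open>0 \<le> c\<close>)
qed

(* The matrix is H^2 - H for H = B B^T, and B^T maps eigenvectors of H with nonzero
   eigenvalue to eigenvectors of B^T B. *)
lemma eigenvalues_gram_defect:
  fixes B :: "real^'r^'n"
  assumes "\<kappa> \<in> eigenvalues (B ** (transpose B ** B - mat 1) ** transpose B)"
  shows "\<kappa> = 0 \<or> (\<exists>\<mu>\<in>eigenvalues (transpose B ** B). \<kappa> = \<mu> * (\<mu> - 1))"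
proof -
  define H where "H = B ** transpose B"
  have W: "B ** (transpose B ** B - mat 1) ** transpose B = H ** H - H"
    by (simp add: H_def matrix_diff_ldistrib matrix_diff_rdistrib matrix_mul_assoc)
  have "transpose H = H"
    by (simp add: H_def matrix_transpose_mul)
  moreover have "H ** (H ** H - H) = (H ** H - H) ** H"
    by (simp add: matrix_diff_ldistrib matrix_diff_rdistrib matrix_mul_assoc)
  moreover obtain v where "v \<noteq> 0" "(H ** H - H) *v v = \<kappa> *\<^sub>R v"
    using assms W by (auto simp: eigenvalues_def)
  ultimately obtain u \<nu> where u: "u \<noteq> 0" "(H ** H - H) *v u = \<kappa> *\<^sub>R u" "H *v u = \<nu> *\<^sub>R u"
    by (rule commuting_symmetric_common_eigenvector)
  have "(H ** H - H) *v u = (\<nu> * (\<nu> - 1)) *\<^sub>R u"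
    using u(3) by (simp add: matrix_vector_mult_diff_rdistrib matrix_vector_mul_assoc[symmetric]
        matrix_vector_mult_scaleR algebra_simps)
  with u(1,2) have \<kappa>: "\<kappa> = \<nu> * (\<nu> - 1)"
    by simp
  show ?thesis
  proof (cases "\<nu> = 0")
    case False
    define w where "w = transpose B *v u"
    have Bw: "B *v w = \<nu> *\<^sub>R u"
      using u(3) unfolding w_def H_def by (simp only: matrix_vector_mul_assoc)
    then have "(transpose B ** B) *v w = transpose B *v (\<nu> *\<^sub>R u)"
      by (simp only: matrix_vector_mul_assoc[symmetric])
    then have "(transpose B ** B) *v w = \<nu> *\<^sub>R w"
      by (simp add: w_def matrix_vector_mult_scaleR)
    moreover have "w \<noteq> 0"
      using Bw False u(1) by auto
    ultimately show ?thesis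
      using \<kappa> by (auto simp: eigenvalues_def)
  qed (simp add: \<kappa>)
qed

lemma spec_norm_gram_defect_le:
  fixes B :: "real^'r^'n"
  shows "spec_norm (B ** (transpose B ** B - mat 1) ** transpose B)
    \<le> Max ((\<lambda>\<mu>. \<bar>\<mu> * (\<mu> - 1)\<bar>) ` eigenvalues (transpose B ** B))"
    (is "_ \<le> Max (?f ` ?E)")
proof (rule spec_norm_symmetric_le)
  have "transpose (transpose B ** B) = transpose B ** B"
    by (simp add: matrix_transpose_mul)
  then have "finite ?E" and "?E \<noteq> {}"
    using finite_eigenvalues_symmetric eigenvalues_symmetric_nonempty by blast+
  then have "0 \<le> Max (?f ` ?E)" and "\<And>\<mu>. \<mu> \<in> ?E \<Longrightarrow> ?f \<mu> \<le> Max (?f ` ?E)"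
    by (auto simp: Max_ge_iff)
  then show "\<bar>\<kappa>\<bar> \<le> Max (?f ` ?E)"
    if "\<kappa> \<in> eigenvalues (B ** (transpose B ** B - mat 1) ** transpose B)" for \<kappa>
    using eigenvalues_gram_defect[OF that] by auto
  show "transpose (B ** (transpose B ** B - mat 1) ** transpose B)
      = B ** (transpose B ** B - mat 1) ** transpose B"
    by (simp add: matrix_transpose_mul transpose_diff matrix_mul_assoc)
qed

lemma orthogonal_matrix_mat_1_plus:
  fixes C :: "real^'n^'n"
  assumes "orthogonal_matrix (mat 1 + C)"
  shows "transpose C ** C = - (C + transpose C)"
proof -
  have "transpose (mat 1 + C) ** (mat 1 + C) = mat 1 + (C + transpose C + transpose C ** C)"
    by (simp add: transpose_add matrix_add_ldistrib matrix_add_rdistrib algebra_simps)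
  then have "C + transpose C + transpose C ** C = 0"
    using assms by (simp add: orthogonal_matrix)
  then have "transpose C ** C + (C + transpose C) = 0"
    by (simp add: add.commute add.left_commute)
  then show ?thesis
    by (rule eq_neg_iff_add_eq_0[THEN iffD2])
qed

lemma orthogonality_defect_low_rank_update:
  fixes B :: "real^'r^'n" and C :: "real^'r^'r"
  assumes "orthogonal_matrix (mat 1 + C)"
  defines "Y \<equiv> mat 1 + B ** C ** transpose B"
  shows "transpose Y ** Y - mat 1
    = B ** transpose C ** (transpose B ** B - mat 1) ** C ** transpose B"
proof -
  have CtC: "X ** transpose C ** C = - (X ** C) - X ** transpose C" for X :: "real^'r^'n"
  proof -
    have "X ** transpose C ** C = X ** (- (C + transpose C))"
      by (simp add: matrix_mul_assoc[symmetric] orthogonal_matrix_mat_1_plus[OF assms(1)])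
    also have "\<dots> = - (X ** C) - X ** transpose C"
      by (simp add: matrix_mul_uminus_right matrix_diff_ldistrib)
    finally show ?thesis .
  qed
  show ?thesis
    by (simp add: Y_def transpose_add matrix_transpose_mul matrix_add_ldistrib matrix_add_rdistrib
        matrix_diff_ldistrib matrix_diff_rdistrib matrix_mul_assoc CtC matrix_mul_uminus_left
        algebra_simps)
qed

lemma spec_norm_orthogonality_defect_le:
  fixes S :: "real^'n^'n" and B :: "real^'r^'n"
  assumes skew: "transpose S = - S" and B: "spec_norm B \<le> 1"
  defines "Y \<equiv> mat 1 + B ** (mat_exp (transpose B ** S ** B) - mat 1) ** transpose B"
  shows "spec_norm (transpose Y ** Y - mat 1)
    \<le> (exp (spec_norm S) - 1)\<^sup>2 * spec_norm (B ** (transpose B ** B - mat 1) ** transpose B)"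
proof -
  define s where "s = spec_norm S"
  define K where "K = transpose B ** S ** B"
  define W where "W = B ** (transpose B ** B - mat 1) ** transpose B"
  obtain P where exp_K: "mat_exp K = mat 1 + K ** P" and P: "spec_norm P \<le> exprel (spec_norm K)"
    using mat_exp_eq_mat_1_plus_mult by blast
  define Z where "Z = B ** transpose P ** transpose B ** transpose S"
  have "transpose K = - K"
    by (simp add: K_def matrix_transpose_mul skew matrix_mul_uminus_left matrix_mul_uminus_right
        matrix_mul_assoc)
  then have "orthogonal_matrix (mat 1 + K ** P)"
    by (simp only: orthogonal_matrix_mat_exp flip: exp_K)
  then have "transpose Y ** Y - mat 1
      = B ** transpose (K ** P) ** (transpose B ** B - mat 1) ** (K ** P) ** transpose B"
    unfolding Y_def K_def[symmetric] exp_K by (simp add: orthogonality_defect_low_rank_update)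
  \<comment> \<open>the outer factors \<open>B\<close> of both copies of \<open>K\<close> sandwich the Gram defect into \<open>W\<close>\<close>
  also have "\<dots> = Z ** W ** transpose Z"
    by (simp add: Z_def K_def W_def matrix_transpose_mul matrix_mul_assoc)
  finally have Y: "transpose Y ** Y - mat 1 = Z ** W ** transpose Z" .
  have "spec_norm K \<le> 1 * s * 1"
    unfolding K_def s_def using B by (intro spec_norm_mult_le) (simp_all add: spec_norm_transpose)
  then have "exprel (spec_norm K) \<le> exprel s"
    by (intro exprel_mono spec_norm_nonneg) simp
  then have "spec_norm (transpose P) \<le> exprel s"
    using P by (simp add: spec_norm_transpose)
  then have "spec_norm Z \<le> 1 * exprel s * 1 * s"
    unfolding Z_def using B by (intro spec_norm_mult_le) (simp_all add: spec_norm_transpose s_def)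
  also have "\<dots> = exp s - 1"
    using exp_eq_exprel[of s] by simp
  finally have "spec_norm (Z ** W ** transpose Z) \<le> (exp s - 1) * spec_norm W * (exp s - 1)"
    by (intro spec_norm_mult_le) (simp_all add: spec_norm_transpose)
  then show ?thesis
    unfolding Y by (simp add: s_def W_def power2_eq_square algebra_simps)
qed

lemma singular_values_defects_eq:
  "{\<bar>\<sigma>^2 * (\<sigma>^2 - 1)\<bar> | \<sigma>. \<sigma> \<in> singular_values B}
    = (\<lambda>\<mu>. \<bar>\<mu> * (\<mu> - 1)\<bar>) ` eigenvalues (transpose B ** B)"
proof -
  have "{\<bar>\<sigma>^2 * (\<sigma>^2 - 1)\<bar> | \<sigma>. \<sigma> \<in> singular_values B}
      = (\<lambda>\<sigma>. \<bar>\<sigma>^2 * (\<sigma>^2 - 1)\<bar>) ` sqrt ` eigenvalues (transpose B ** B)"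
    unfolding singular_values_eq_sqrt_eigenvalues by blast
  also have "\<dots> = (\<lambda>\<mu>. \<bar>\<mu> * (\<mu> - 1)\<bar>) ` eigenvalues (transpose B ** B)"
    unfolding image_image using eigenvalues_gram_nonneg[of _ B] by (intro image_cong) auto
  finally show ?thesis .
qed

lemma abs_mult_minus_one_le_quarter:
  fixes \<mu> :: real
  assumes "0 \<le> \<mu>" and "\<mu> \<le> 1"
  shows "\<bar>\<mu> * (\<mu> - 1)\<bar> \<le> 1 / 4"
proof -
  have "\<mu> * (\<mu> - 1) \<le> 0"
    using assms by (simp add: mult_nonneg_nonpos)
  moreover have "0 \<le> (\<mu> - 1 / 2)\<^sup>2"
    by simp
  ultimately show ?thesis
    by (simp add: power2_eq_square algebra_simps)
qed

theorem theorem3: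
  fixes S :: "real^'n^'n" and B :: "real^'r^'n"
  assumes "CARD('r) \<le> CARD('n)"
    and "transpose S = - S"
    and "\<forall>\<sigma>\<in>singular_values B. 0 \<le> \<sigma> \<and> \<sigma> \<le> 1"
  defines "Y \<equiv> mat 1 + B ** (mat_exp (transpose B ** S ** B) - mat 1) ** transpose B"
  shows "spec_norm (transpose Y ** Y - mat 1)
           \<le> (exp (spec_norm S) - 1)^2 *
             Max {\<bar>\<sigma>^2 * (\<sigma>^2 - 1)\<bar> | \<sigma>. \<sigma> \<in> singular_values B}
         \<and> (exp (spec_norm S) - 1)^2 *
             Max {\<bar>\<sigma>^2 * (\<sigma>^2 - 1)\<bar> | \<sigma>. \<sigma> \<in> singular_values B}
           \<le> (1/4) * (exp (spec_norm S) - 1)^2"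
proof -
  define E where "E = eigenvalues (transpose B ** B)"
  define M where "M = Max ((\<lambda>\<mu>. \<bar>\<mu> * (\<mu> - 1)\<bar>) ` E)"
  have E_01: "0 \<le> \<mu> \<and> \<mu> \<le> 1" if "\<mu> \<in> E" for \<mu>
    using that assms(3) eigenvalues_gram_nonneg[of \<mu> B]
    by (auto simp: E_def singular_values_eq_sqrt_eigenvalues)
  have "transpose (transpose B ** B) = transpose B ** B"
    by (simp add: matrix_transpose_mul)
  then have "finite E" and "E \<noteq> {}"
    unfolding E_def using finite_eigenvalues_symmetric eigenvalues_symmetric_nonempty by blast+
  then have "M \<le> 1 / 4"
    unfolding M_def using E_01 abs_mult_minus_one_le_quarter by (subst Max_le_iff) auto
  have "spec_norm B \<le> 1"
    by (rule spec_norm_le_if_gram_eigenvalues_le) (use E_01 in \<open>auto simp: E_def\<close>)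
  then have "spec_norm (transpose Y ** Y - mat 1)
      \<le> (exp (spec_norm S) - 1)\<^sup>2 * spec_norm (B ** (transpose B ** B - mat 1) ** transpose B)"
    unfolding Y_def using assms(2) by (rule spec_norm_orthogonality_defect_le[rotated])
  also have "\<dots> \<le> (exp (spec_norm S) - 1)\<^sup>2 * M"
    unfolding M_def E_def by (intro mult_left_mono spec_norm_gram_defect_le) simp
  finally have "spec_norm (transpose Y ** Y - mat 1) \<le> (exp (spec_norm S) - 1)\<^sup>2 * M" .
  moreover have "(exp (spec_norm S) - 1)\<^sup>2 * M \<le> 1 / 4 * (exp (spec_norm S) - 1)\<^sup>2"
    using mult_left_mono[OF \<open>M \<le> 1 / 4\<close> zero_le_power2[of "exp (spec_norm S) - 1"]]
    by (simp add: mult.commute)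
  ultimately show ?thesis
    unfolding singular_values_defects_eq M_def E_def by blast
qed

end
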